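(* Let $m\ge4$ be even and let $f:\mathrm{GF}(2^m)\to\mathrm{GF}(2)$ be a bent function with $f(0)=0$; put $n_f=|D_f|$ (so $n_f=2^{m-1}\pm2^{(m-2)/2}$). Then $\mathcal{C}_{D_f}$ is a two-weight binary code with parameters $[n_f,\ m,\ (n_f-2^{(m-2)/2})/2]$, whose nonzero weights are $\frac{n_f}{2}-2^{(m-4)/2}$ with multiplicity $\frac{2^m-1-n_f2^{-(m-2)/2}}{2}$ and $\frac{n_f}{2}+2^{(m-4)/2}$ with multiplicity $\frac{2^m-1+n_f2^{-(m-2)/2}}{2}$.
   Context: $\mathrm{Tr}$ denotes the absolute trace from $\mathrm{GF}(2^m)$ onto $\mathrm{GF}(2)$. For a subset $D=\{d_1,\dots,d_n\}\subseteq\mathrm{GF}(2^m)$ (listed in a fixed order), $\mathcal{C}_D=\{(\mathrm{Tr}(xd_1),\dots,\mathrm{Tr}(xd_n)) : x\in\mathrm{GF}(2^m)\}$, a binary linear code of length $n$. The support of $f$ is $D_f=\{x:f(x)=1\}$. The Walsh transform of $f$ is $\hat f(w)=\sum_{x\in\mathrm{GF}(2^m)}(-1)^{f(x)+\mathrm{Tr}(wx)}$; $f$ is bent if $|\hat f(w)|=2^{m/2}$ for all $w\in\mathrm{GF}(2^m)$. *)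

theory Defs
  imports Complex_Main
begin

text \<open>GF(2^m) is modelled by a finite field type 'a with CARD('a) = 2^m.
  The absolute trace onto GF(2) = {0,1} (a subfield of 'a):\<close>
definition tr :: "nat \<Rightarrow> 'a::field \<Rightarrow> 'a" where
  "tr m x = (\<Sum>i<m. x ^ (2 ^ i))"

text \<open>Boolean functions GF(2^m) -> GF(2) are modelled as 'a => bool (True = 1).\<close>
definition support :: "('a \<Rightarrow> bool) \<Rightarrow> 'a set" where
  "support f = {x. f x}"

definition walsh :: "nat \<Rightarrow> ('a::{finite,field} \<Rightarrow> bool) \<Rightarrow> 'a \<Rightarrow> int" where
  "walsh m f w = (\<Sum>x\<in>UNIV. (-1) ^ (of_bool (f x) + (if tr m (w * x) = 0 then 0 else 1)))"

definition is_bent :: "nat \<Rightarrow> ('a::{finite,field} \<Rightarrow> bool) \<Rightarrow> bool" where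
  "is_bent m f \<longleftrightarrow> (\<forall>w. real_of_int \<bar>walsh m f w\<bar> = 2 powr (real m / 2))"

text \<open>The code C_D; a codeword is indexed by the elements of D (the coordinates),
  i.e. the word (Tr(x d))_{d in D}; entries outside D are set to 0.\<close>
definition codeword :: "nat \<Rightarrow> 'a::field set \<Rightarrow> 'a \<Rightarrow> ('a \<Rightarrow> 'a)" where
  "codeword m D x = (\<lambda>d. if d \<in> D then tr m (x * d) else 0)"

definition code :: "nat \<Rightarrow> 'a::field set \<Rightarrow> ('a \<Rightarrow> 'a) set" where
  "code m D = range (codeword m D)"

definition hweight :: "'a::zero set \<Rightarrow> ('a \<Rightarrow> 'a) \<Rightarrow> nat" where
  "hweight D c = card {d\<in>D. c d \<noteq> 0}"

definition weight_mult :: "nat \<Rightarrow> 'a::field set \<Rightarrow> nat \<Rightarrow> nat" where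
  "weight_mult m D w = card {c \<in> code m D. c \<noteq> (\<lambda>_. 0) \<and> hweight D c = w}"

definition nonzero_weights :: "nat \<Rightarrow> 'a::field set \<Rightarrow> nat set" where
  "nonzero_weights m D = {hweight D c | c. c \<in> code m D \<and> c \<noteq> (\<lambda>_. 0)}"

definition min_distance :: "nat \<Rightarrow> 'a::field set \<Rightarrow> nat" where
  "min_distance m D = Min (nonzero_weights m D)"

end

theory Submission
  imports Defs "HOL-Number_Theory.Residues" "HOL-Computational_Algebra.Polynomial"
begin

text \<open>
  Write W(x) for the Walsh coefficient of f at x and c(x) = (Tr(x d)) for d in D_f. For x \<noteq> 0,
  orthogonality of the additive character y \<mapsto> (-1)^Tr(y) gives W(x) = 4 wt(c(x)) - 2 n_f.
  A bent f has W(x) = \<plusminus>2^(m/2) everywhere, so the code has exactly two nonzero weights, and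
  since 2 n_f > 2^(m/2) once m \<ge> 4 no nonzero codeword vanishes, i.e. x \<mapsto> c(x) is injective.
  As f(0) = 0, W(0) = 2^m - 2 n_f determines n_f, and the Walsh coefficients sum to 2^m; together
  with the number 2^m - 1 of nonzero points this fixes how often each sign, hence each weight,
  occurs.
\<close>

lemma CHAR_eq_2_if_card_power_2:
  assumes "card (UNIV :: 'a::{finite,field} set) = 2 ^ m"
  shows "CHAR('a) = 2"
proof -
  have prime: "prime CHAR('a)"
    by (intro prime_CHAR_semidom finite_imp_CHAR_pos) simp
  moreover have "CHAR('a) dvd 2 ^ m"
    using CHAR_dvd_CARD[where 'a='a] assms by simp
  ultimately have "CHAR('a) dvd 2"
    by (rule prime_dvd_power)
  then have "CHAR('a) \<le> 2"
    by (rule dvd_imp_le) simp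
  with prime_gt_1_nat[OF prime] show ?thesis
    by linarith
qed

lemma power_card_UNIV_eq_self: "(x::'a::{finite,field}) ^ card (UNIV :: 'a set) = x"
proof (cases "x = 0")
  case False
  have "(\<Prod>y\<in>UNIV-{0}. x * y) = (\<Prod>y\<in>UNIV-{0::'a}. y)"
    by (rule prod.reindex_bij_witness[of _ "\<lambda>y. y / x" "\<lambda>y. x * y"]) (use False in auto)
  then have "x ^ (card (UNIV :: 'a set) - 1) = 1"
    by (simp add: prod.distrib card_Diff_singleton)
  then show ?thesis
    using power_Suc[of x "card (UNIV :: 'a set) - 1"] finite_UNIV_card_ge_0[where 'a='a] by simp
next
  case True
  then show ?thesis
    using finite_UNIV_card_ge_0[where 'a='a] by simp
qed

lemma tr_zero [simp]: "tr m 0 = 0"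
  by (simp add: tr_def zero_power)

lemma hweight_codeword: "hweight D (codeword m D x) = card {d \<in> D. tr m (x * d) \<noteq> 0}"
  unfolding hweight_def codeword_def by (metis (lifting))

lemma hweight_eq_0_iff:
  "finite D \<Longrightarrow> hweight D (codeword m D x) = 0 \<longleftrightarrow> codeword m D x = (\<lambda>_. 0)"
  by (auto simp: hweight_def codeword_def fun_eq_iff)

lemma hweight_codeword_0 [simp]: "hweight D (codeword m D 0) = 0"
  by (simp add: hweight_def codeword_def)

definition tr_sign :: "nat \<Rightarrow> 'a::field \<Rightarrow> int" where
  "tr_sign m y = (if tr m y = 0 then 1 else -1)"

lemma walsh_eq_sum_tr_sign:
  "walsh m f (w::'a::{finite,field}) = (\<Sum>x\<in>UNIV. (if f x then -1 else 1) * tr_sign m (w * x))"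
  unfolding walsh_def tr_sign_def by (rule sum.cong) auto

lemma bent_walsh_values:
  assumes "is_bent (2 * h) f"
  shows "walsh (2 * h) f w = 2 ^ h \<or> walsh (2 * h) f w = - (2 ^ h)"
proof -
  have "real_of_int \<bar>walsh (2 * h) f w\<bar> = 2 ^ h"
    using assms by (simp add: is_bent_def powr_realpow)
  then have "\<bar>walsh (2 * h) f w\<bar> = 2 ^ h"
    by (metis of_int_eq_numeral_power_cancel_iff)
  then show ?thesis
    by linarith
qed

lemma two_valued_sum:
  fixes W :: "'b \<Rightarrow> int"
  assumes "finite S" "q \<noteq> 0" "\<And>x. x \<in> S \<Longrightarrow> W x = q \<or> W x = - q"
  shows "card {x \<in> S. W x = q} + card {x \<in> S. W x = - q} = card S"
    and "sum W S = q * (int (card {x \<in> S. W x = q}) - int (card {x \<in> S. W x = - q}))"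
proof -
  let ?A = "{x \<in> S. W x = q}" and ?B = "{x \<in> S. W x = - q}"
  have S: "S = ?A \<union> ?B"
    using assms(3) by blast
  have disj: "?A \<inter> ?B = {}"
    using assms(2) by auto
  have "card S = card ?A + card ?B"
    using S disj assms(1) by (metis card_Un_disjoint finite_Un)
  then show "card ?A + card ?B = card S" ..
  have "sum W S = sum W ?A + sum W ?B"
    using S disj assms(1) by (metis sum.union_disjoint finite_Un)
  also have "\<dots> = q * (int (card ?A) - int (card ?B))"
    by (simp add: algebra_simps)
  finally show "sum W S = q * (int (card ?A) - int (card ?B))" .
qed

context
  fixes m :: nat
  assumes card_UNIV: "card (UNIV :: 'a::{finite,field} set) = 2 ^ m"
begin

lemma CHAR_2: "CHAR('a) = 2"
  using CHAR_eq_2_if_card_power_2[OF card_UNIV] .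

lemma uminus_eq_self: "- (x::'a) = x"
  by (rule uminus_CHAR_2[OF CHAR_2])

lemma add_self_eq_0: "(x::'a) + x = 0"
  using uminus_eq_self[of x] by (metis add.right_inverse)

lemma add_power_2_power: "((x::'a) + y) ^ 2 ^ i = x ^ 2 ^ i + y ^ 2 ^ i"
  by (rule freshmans_dream') (simp_all add: CHAR_2)

lemma tr_add: "tr m ((x::'a) + y) = tr m x + tr m y"
  by (simp add: tr_def add_power_2_power sum.distrib)

lemma tr_square: "tr m (x::'a) ^ 2 = tr m x"
proof -
  have "tr m x ^ 2 = (\<Sum>i<m. x ^ 2 ^ Suc i)"
    unfolding tr_def
    by (subst freshmans_dream_sum'[where n=1]) (simp_all add: CHAR_2 power_mult[symmetric] mult.commute)
  also have "\<dots> = tr m x"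
    using sum.lessThan_Suc_shift[of "\<lambda>i. x ^ 2 ^ i" m] power_card_UNIV_eq_self[of x]
    by (simp add: tr_def card_UNIV)
  finally show ?thesis .
qed

lemma tr_eq_0_or_1: "tr m (x::'a) = 0 \<or> tr m x = 1"
proof -
  have "tr m x * (tr m x - 1) = 0"
    using tr_square[of x] by (simp add: power2_eq_square algebra_simps)
  then show ?thesis
    by simp
qed

lemma m_pos: "0 < m"
proof -
  have "2 \<le> card (UNIV :: 'a set)"
    using card_mono[of UNIV "{0, 1 :: 'a}"] by simp
  then show ?thesis
    using card_UNIV by (cases m) simp_all
qed

text \<open>A nonzero polynomial of degree 2^(m-1) cannot vanish on all 2^m field elements.\<close>
lemma tr_not_identically_zero: "\<exists>a::'a. tr m a \<noteq> 0"
proof (rule ccontr)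
  assume "\<not> (\<exists>a::'a. tr m a \<noteq> 0)"
  define p :: "'a poly" where "p = (\<Sum>i<m. monom 1 (2 ^ i))"
  have roots: "{x. poly p x = 0} = UNIV"
    using \<open>\<not> _\<close> by (simp add: p_def poly_sum poly_monom tr_def)
  have "coeff p (2 ^ (m - 1)) = 1"
    using m_pos by (simp add: p_def coeff_sum coeff_monom sum.delta)
  then have "p \<noteq> 0"
    by auto
  have "degree p \<le> 2 ^ (m - 1)"
    unfolding p_def
    by (intro degree_sum_le) (auto simp: degree_monom_eq intro!: power_increasing)
  moreover have "(2::nat) ^ (m - 1) < 2 ^ m"
    using m_pos by simp
  moreover have "2 ^ m \<le> degree p"
    using card_poly_roots_bound[OF \<open>p \<noteq> 0\<close>] roots card_UNIV by simp
  ultimately show False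
    by linarith
qed

lemma tr_sign_add: "tr_sign m ((x::'a) + y) = tr_sign m x * tr_sign m y"
  using tr_eq_0_or_1[of x] tr_eq_0_or_1[of y] add_self_eq_0[of 1]
  by (auto simp: tr_sign_def tr_add)

lemma sum_tr_sign: "(\<Sum>y\<in>UNIV. tr_sign m (y::'a)) = 0"
proof -
  obtain a :: 'a where "tr_sign m a = -1"
    using tr_not_identically_zero by (auto simp: tr_sign_def)
  have "(\<Sum>y\<in>UNIV. tr_sign m (y::'a)) = (\<Sum>y\<in>UNIV. tr_sign m (y + a))"
    by (rule sum.reindex_bij_witness[of _ "\<lambda>y. y + a" "\<lambda>y. y - a"]) auto
  also have "\<dots> = - (\<Sum>y\<in>UNIV. tr_sign m (y::'a))"
    using \<open>tr_sign m a = -1\<close> by (simp add: tr_sign_add sum_negf)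
  finally show ?thesis
    by simp
qed

lemma sum_tr_sign_mult: "(\<Sum>y\<in>UNIV. tr_sign m ((x::'a) * y)) = (if x = 0 then 2 ^ m else 0)"
proof (cases "x = 0")
  case False
  have "(\<Sum>y\<in>UNIV. tr_sign m (x * y)) = (\<Sum>y\<in>UNIV. tr_sign m (y::'a))"
    by (rule sum.reindex_bij_witness[of _ "\<lambda>y. y / x" "\<lambda>y. x * y"]) (use False in auto)
  with False show ?thesis
    by (simp add: sum_tr_sign)
next
  case True
  then show ?thesis
    by (simp add: tr_sign_def card_UNIV)
qed

lemma walsh_eq_hweight:
  "walsh m f (w::'a) = (if w = 0 then 2 ^ m else 0) - 2 * int (card (support f))
     + 4 * int (hweight (support f) (codeword m (support f) w))"
proof -
  let ?D = "support f"
  have "walsh m f w = (\<Sum>x\<in>UNIV. tr_sign m (w * x) - 2 * (if x \<in> ?D then tr_sign m (w * x) else 0))"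
    unfolding walsh_eq_sum_tr_sign by (rule sum.cong) (auto simp: support_def)
  also have "\<dots> = (\<Sum>x\<in>UNIV. tr_sign m (w * x)) - 2 * (\<Sum>x\<in>?D. tr_sign m (w * x))"
    by (simp add: sum_subtractf sum_distrib_left[symmetric] sum.inter_filter[symmetric])
  also have "(\<Sum>x\<in>?D. tr_sign m (w * x)) = (\<Sum>x\<in>?D. 1 - 2 * of_bool (tr m (w * x) \<noteq> 0))"
    by (rule sum.cong) (auto simp: tr_sign_def)
  also have "\<dots> = int (card ?D) - 2 * int (card {d \<in> ?D. tr m (w * d) \<noteq> 0})"
    by (simp add: sum_subtractf sum_distrib_left[symmetric] sum.inter_filter[symmetric] Int_def)
  finally show ?thesis
    by (simp add: sum_tr_sign_mult hweight_codeword)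
qed

lemma walsh_eq_hweight_nonzero:
  "w \<noteq> 0 \<Longrightarrow> walsh m f (w::'a) = 4 * int (hweight (support f) (codeword m (support f) w))
     - 2 * int (card (support f))"
  by (simp add: walsh_eq_hweight)

lemma walsh_zero: "walsh m f (0::'a) = 2 ^ m - 2 * int (card (support f))"
  using walsh_eq_hweight[of f 0] by simp

lemma sum_walsh:
  assumes "\<not> f 0"
  shows "(\<Sum>w\<in>UNIV. walsh m f (w::'a)) = 2 ^ m"
proof -
  have "(\<Sum>w\<in>UNIV. walsh m f (w::'a))
      = (\<Sum>x\<in>UNIV. (if f x then -1 else 1) * (\<Sum>w\<in>UNIV. tr_sign m (x * w)))"
    unfolding walsh_eq_sum_tr_sign
    by (subst sum.swap) (simp add: sum_distrib_left mult.commute)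
  also have "\<dots> = (\<Sum>x\<in>UNIV. if x = (0::'a) then 2 ^ m else 0)"
    by (rule sum.cong) (auto simp: sum_tr_sign_mult assms)
  finally show ?thesis
    by simp
qed

lemma codeword_add: "codeword m D ((x::'a) + y) d = codeword m D x d + codeword m D y d"
  by (simp add: codeword_def tr_add distrib_right)

context
  fixes D :: "'a set"
  assumes codeword_eq_0_imp: "\<And>x. codeword m D x = (\<lambda>_. 0) \<Longrightarrow> x = 0"
begin

lemma inj_codeword: "inj (codeword m D)"
proof (rule injI)
  fix x y
  assume "codeword m D x = codeword m D y"
  then have "codeword m D (x + y) = (\<lambda>_. 0)"
    by (simp add: fun_eq_iff codeword_add add_self_eq_0)
  then have "x + y = 0"
    by (rule codeword_eq_0_imp)
  then show "x = y"
    using uminus_eq_self[of y] by (simp add: add_eq_0_iff)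
qed

lemma card_code: "card (code m D) = 2 ^ m"
  unfolding code_def using inj_codeword card_UNIV by (simp add: card_image)

lemma codeword_eq_0_iff: "codeword m D x = (\<lambda>_. 0) \<longleftrightarrow> x = 0"
  using codeword_eq_0_imp by (auto simp: codeword_def)

lemma nonzero_weights_eq: "nonzero_weights m D = (\<lambda>x. hweight D (codeword m D x)) ` (UNIV - {0})"
  unfolding nonzero_weights_def code_def by (auto simp: codeword_eq_0_iff)

lemma weight_mult_eq: "weight_mult m D k = card {x. x \<noteq> 0 \<and> hweight D (codeword m D x) = k}"
proof -
  have "{c \<in> code m D. c \<noteq> (\<lambda>_. 0) \<and> hweight D c = k}
      = codeword m D ` {x. x \<noteq> 0 \<and> hweight D (codeword m D x) = k}"
    unfolding code_def by (auto simp: codeword_eq_0_iff)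
  then show ?thesis
    unfolding weight_mult_def using inj_codeword by (simp add: card_image inj_on_subset)
qed

end

text \<open>By walsh_eq_hweight_nonzero, the hypothesis says that no nonzero x has the zero codeword.\<close>
context
  fixes f :: "'a \<Rightarrow> bool"
  assumes walsh_ne: "\<And>w. w \<noteq> 0 \<Longrightarrow> walsh m f w \<noteq> - 2 * int (card (support f))"
begin

lemma codeword_support_eq_0_imp: "codeword m (support f) x = (\<lambda>_. 0) \<Longrightarrow> x = 0"
  using walsh_eq_hweight[of f x] walsh_ne[of x] hweight_eq_0_iff[of "support f" m x] by force

lemma nonzero_weights_walsh:
  "nonzero_weights m (support f)
     = {k. \<exists>w. w \<noteq> 0 \<and> walsh m f w = 4 * int k - 2 * int (card (support f))}"
proof -
  have "nonzero_weights m (support f) = (\<lambda>x. hweight (support f) (codeword m (support f) x)) ` (UNIV - {0})"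
    by (rule nonzero_weights_eq) (rule codeword_support_eq_0_imp)
  then show ?thesis
    by (auto simp: walsh_eq_hweight)
qed

lemma weight_mult_walsh:
  "weight_mult m (support f) k
     = card {w. w \<noteq> 0 \<and> walsh m f w = 4 * int k - 2 * int (card (support f))}"
proof -
  have "weight_mult m (support f) k = card {x. x \<noteq> 0 \<and> hweight (support f) (codeword m (support f) x) = k}"
    by (rule weight_mult_eq) (rule codeword_support_eq_0_imp)
  then show ?thesis
    by (auto simp: walsh_eq_hweight intro!: arg_cong[of _ _ card])
qed

lemma nonzero_weights_two_valued:
  assumes "\<And>w. walsh m f w = q \<or> walsh m f w = - q"
    and "a \<noteq> 0" "walsh m f a = q" and "b \<noteq> 0" "walsh m f b = - q"
    and "4 * int w1 - 2 * int (card (support f)) = - q"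
    and "4 * int w2 - 2 * int (card (support f)) = q"
  shows "nonzero_weights m (support f) = {w1, w2}"
proof -
  have "k \<in> {w1, w2}" if "walsh m f w = 4 * int k - 2 * int (card (support f))" for k w
  proof -
    have "int k = int w1 \<or> int k = int w2"
      using assms(1)[of w] assms(6,7) that by linarith
    then show ?thesis
      by auto
  qed
  then show ?thesis
    unfolding nonzero_weights_walsh using assms(2-7) by auto
qed
end

lemma bent_walsh_ne:
  assumes "m = 2 * h" "2 \<le> h" "is_bent m f"
  shows "walsh m f (w::'a) \<noteq> - 2 * int (card (support f))"
proof -
  have "(2::int) ^ 2 \<le> 2 ^ h"
    using assms(2) by (intro power_increasing) simp_all
  moreover have "(2::int) ^ m = 2 ^ h * 2 ^ h"
    by (simp add: assms(1) power_mult power2_eq_square flip: power_mult_distrib)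
  ultimately have "2 ^ h < 2 ^ m - walsh m f 0"
    using bent_walsh_values[of h f 0] assms(1,3) by (auto simp: algebra_simps intro: le_less_trans)
  then have "2 ^ h < 2 * int (card (support f))"
    by (simp add: walsh_zero)
  moreover have "walsh m f w = 2 ^ h \<or> walsh m f w = - (2 ^ h)"
    using bent_walsh_values[of h f w] assms(1,3) by simp
  ultimately show ?thesis
    by (smt (verit) zero_less_power)
qed

lemma bent_walsh_sign_counts:
  assumes "m = 2 * h" "is_bent m f" "\<not> f 0" "walsh m f 0 = \<epsilon> * 2 ^ h"
  shows "2 * int (card {w::'a. w \<noteq> 0 \<and> walsh m f w = 2 ^ h}) = 2 ^ m - 1 + (2 ^ h - \<epsilon>)"
    and "2 * int (card {w::'a. w \<noteq> 0 \<and> walsh m f w = - (2 ^ h)}) = 2 ^ m - 1 - (2 ^ h - \<epsilon>)"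
proof -
  define q :: int where "q = 2 ^ h"
  have qq: "q * q = 2 ^ m"
    by (simp add: q_def assms(1) power_mult power2_eq_square flip: power_mult_distrib)
  let ?S = "UNIV - {0::'a}" and ?W = "walsh m f"
  have "card {x \<in> ?S. ?W x = q} + card {x \<in> ?S. ?W x = - q} = card ?S"
    and sum: "sum ?W ?S = q * (int (card {x \<in> ?S. ?W x = q}) - int (card {x \<in> ?S. ?W x = - q}))"
    using two_valued_sum[of ?S q ?W] bent_walsh_values[of h f] assms(1,2) by (auto simp: q_def)
  moreover have "int (card ?S) = q * q - 1"
    by (simp add: card_Diff_singleton card_UNIV qq of_nat_diff)
  ultimately have plus: "int (card {x \<in> ?S. ?W x = q}) + int (card {x \<in> ?S. ?W x = - q}) = q * q - 1"
    by linarith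
  have "sum ?W ?S = q * q - \<epsilon> * q"
    using sum_walsh[where f=f, OF assms(3)] assms(4) qq by (simp add: sum_diff1 q_def)
  then have "q * (int (card {x \<in> ?S. ?W x = q}) - int (card {x \<in> ?S. ?W x = - q})) = q * (q - \<epsilon>)"
    using sum by (simp add: algebra_simps)
  then have minus: "int (card {x \<in> ?S. ?W x = q}) - int (card {x \<in> ?S. ?W x = - q}) = q - \<epsilon>"
    by (simp add: q_def)
  show "2 * int (card {w. w \<noteq> 0 \<and> ?W w = 2 ^ h}) = 2 ^ m - 1 + (2 ^ h - \<epsilon>)"
    using plus minus qq by (simp add: q_def)
  show "2 * int (card {w. w \<noteq> 0 \<and> ?W w = - (2 ^ h)}) = 2 ^ m - 1 - (2 ^ h - \<epsilon>)"
    using plus minus qq by (simp add: q_def)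
qed

lemma bent_walsh_signs_attained:
  fixes f :: "'a \<Rightarrow> bool"
  assumes m: "m = 2 * h" and h: "2 \<le> h" and bent: "is_bent m f" and f0: "\<not> f 0"
  shows "\<exists>w. w \<noteq> 0 \<and> walsh m f w = 2 ^ h" and "\<exists>w. w \<noteq> 0 \<and> walsh m f w = - (2 ^ h)"
proof -
  define q :: int where "q = 2 ^ h"
  obtain \<epsilon> where \<epsilon>: "\<epsilon> = 1 \<or> \<epsilon> = -1" and W0: "walsh m f 0 = \<epsilon> * q"
    using bent_walsh_values[of h f 0] bent m q_def by (metis mult_1 mult_minus1)
  have "4 \<le> q"
    using h power_increasing[of 2 h "2::int"] by (simp add: q_def)
  moreover have "q * q = 2 ^ m"
    by (simp add: q_def m power_mult power2_eq_square flip: power_mult_distrib)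
  ultimately have "0 < card {w::'a. w \<noteq> 0 \<and> walsh m f w = q}"
    and "0 < card {w::'a. w \<noteq> 0 \<and> walsh m f w = - q}"
    using bent_walsh_sign_counts[OF m bent f0, of \<epsilon>] W0 \<epsilon> mult_right_mono[of 4 q q]
    by (simp_all add: q_def) linarith+
  then show "\<exists>w. w \<noteq> 0 \<and> walsh m f w = 2 ^ h" and "\<exists>w. w \<noteq> 0 \<and> walsh m f w = - (2 ^ h)"
    by (auto simp: q_def card_gt_0_iff)
qed

lemma bent_support_code:
  fixes f :: "'a \<Rightarrow> bool"
  assumes m: "m = 2 * h" and h: "2 \<le> h" and bent: "is_bent m f" and f0: "\<not> f 0"
  obtains \<epsilon> :: int and w1 w2 :: nat where "\<epsilon> = 1 \<or> \<epsilon> = -1"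
    and "2 * int (card (support f)) = 2 ^ m - \<epsilon> * 2 ^ h"
    and "card (code m (support f)) = 2 ^ m"
    and "nonzero_weights m (support f) = {w1, w2}" and "w1 < w2"
    and "4 * int w1 = 2 * int (card (support f)) - 2 ^ h"
    and "4 * int w2 = 2 * int (card (support f)) + 2 ^ h"
    and "2 * int (weight_mult m (support f) w1) = 2 ^ m - 1 - (2 ^ h - \<epsilon>)"
    and "2 * int (weight_mult m (support f) w2) = 2 ^ m - 1 + (2 ^ h - \<epsilon>)"
proof -
  define q :: int where "q = 2 ^ h"
  let ?N = "int (card (support f))" and ?W = "walsh m f"
  have walsh_values: "?W w = q \<or> ?W w = - q" for w
    using bent_walsh_values[of h f w] bent by (simp add: m q_def)
  then obtain \<epsilon> where \<epsilon>: "\<epsilon> = 1 \<or> \<epsilon> = -1" and W0: "?W 0 = \<epsilon> * q"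
    by (metis mult_1 mult_minus1)
  have walsh_ne: "?W w \<noteq> - 2 * ?N" for w
    using bent_walsh_ne[OF m h bent] .
  obtain a b where a: "a \<noteq> 0" "?W a = q" and b: "b \<noteq> 0" "?W b = - q"
    using bent_walsh_signs_attained[OF m h bent f0] by (auto simp: q_def)
  define w1 w2 where "w1 = hweight (support f) (codeword m (support f) b)"
    and "w2 = hweight (support f) (codeword m (support f) a)"
  have w1: "4 * int w1 - 2 * ?N = - q" and w2: "4 * int w2 - 2 * ?N = q"
    using walsh_eq_hweight_nonzero[of b f] walsh_eq_hweight_nonzero[of a f] a b
    by (simp_all add: w1_def w2_def)
  have "nonzero_weights m (support f) = {w1, w2}"
    using nonzero_weights_two_valued[of f q] walsh_ne walsh_values a b w1 w2 by blast
  moreover have "weight_mult m (support f) w1 = card {w. w \<noteq> 0 \<and> ?W w = - q}"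
    and "weight_mult m (support f) w2 = card {w. w \<noteq> 0 \<and> ?W w = q}"
    using weight_mult_walsh[of f] walsh_ne w1 w2 by simp_all
  moreover have "card (code m (support f)) = 2 ^ m"
    using card_code codeword_support_eq_0_imp walsh_ne by blast
  moreover have "int w1 < int w2"
    using w1 w2 zero_less_power[of "2::int" h] unfolding q_def by linarith
  then have "w1 < w2"
    by simp
  ultimately show thesis
    using that \<epsilon> walsh_zero[of f] W0 w1 w2 bent_walsh_sign_counts[OF m bent f0, of \<epsilon>]
    by (simp add: q_def)
qed

end

lemma two_weight_parameters:
  fixes n w1 w2 M1 M2 h m :: nat and \<epsilon> :: int
  assumes m: "m = 2 * h" and h: "2 \<le> h" and \<epsilon>: "\<epsilon> = 1 \<or> \<epsilon> = -1"
    and n: "2 * int n = 2 ^ m - \<epsilon> * 2 ^ h"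
    and w1: "4 * int w1 = 2 * int n - 2 ^ h" and w2: "4 * int w2 = 2 * int n + 2 ^ h"
    and M1: "2 * int M1 = 2 ^ m - 1 - (2 ^ h - \<epsilon>)" and M2: "2 * int M2 = 2 ^ m - 1 + (2 ^ h - \<epsilon>)"
  shows "real n = 2 ^ (m - 1) + 2 ^ ((m - 2) div 2) \<or> real n = 2 ^ (m - 1) - 2 ^ ((m - 2) div 2)"
    and "real w1 = (real n - 2 ^ ((m - 2) div 2)) / 2"
    and "real w1 = real n / 2 - 2 ^ ((m - 4) div 2)" and "real w2 = real n / 2 + 2 ^ ((m - 4) div 2)"
    and "real M1 = (2 ^ m - 1 - real n / 2 ^ ((m - 2) div 2)) / 2"
    and "real M2 = (2 ^ m - 1 + real n / 2 ^ ((m - 2) div 2)) / 2"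
proof -
  obtain k where k: "h = k + 2"
    using h by (metis add.commute le_add_diff_inverse)
  define q :: real where "q = 2 ^ k"
  have "(2::real) ^ (2 * k) = q * q"
    by (simp add: q_def mult_2 power_add)
  moreover have "m = 2 * k + 4" "m - 1 = 2 * k + 3" "(m - 2) div 2 = k + 1" "(m - 4) div 2 = k"
    using m k by simp_all
  ultimately have q: "0 < q" "(2::real) ^ h = 4 * q" "(2::real) ^ m = 16 * q * q"
    "(2::real) ^ (m - 1) = 8 * q * q" "(2::real) ^ ((m - 2) div 2) = 2 * q"
    "(2::real) ^ ((m - 4) div 2) = q"
    by (simp_all add: q_def k power_add)
  have "2 * real n = 16 * q * q - \<epsilon> * 4 * q"
    and "4 * real w1 = 2 * real n - 4 * q" and "4 * real w2 = 2 * real n + 4 * q"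
    and "2 * real M1 = 16 * q * q - 1 - (4 * q - \<epsilon>)"
    and "2 * real M2 = 16 * q * q - 1 + (4 * q - \<epsilon>)"
    using arg_cong[OF n, of real_of_int] arg_cong[OF w1, of real_of_int]
      arg_cong[OF w2, of real_of_int] arg_cong[OF M1, of real_of_int] arg_cong[OF M2, of real_of_int] q
    by simp_all
  moreover have "real n / (2 * q) = 4 * q - \<epsilon>"
    using calculation(1) q(1) by (simp add: field_simps)
  ultimately show "real n = 2 ^ (m - 1) + 2 ^ ((m - 2) div 2) \<or> real n = 2 ^ (m - 1) - 2 ^ ((m - 2) div 2)"
    and "real w1 = (real n - 2 ^ ((m - 2) div 2)) / 2"
    and "real w1 = real n / 2 - 2 ^ ((m - 4) div 2)" and "real w2 = real n / 2 + 2 ^ ((m - 4) div 2)"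
    and "real M1 = (2 ^ m - 1 - real n / 2 ^ ((m - 2) div 2)) / 2"
    and "real M2 = (2 ^ m - 1 + real n / 2 ^ ((m - 2) div 2)) / 2"
    unfolding q(3-6) using \<epsilon> by auto
qed

theorem mainTheorem7:
  fixes f :: "'a::{finite,field} \<Rightarrow> bool" and m :: nat
  assumes card: "card (UNIV :: 'a set) = 2 ^ m"
    and m4: "m \<ge> 4" and meven: "even m"
    and bent: "is_bent m f" and f0: "\<not> f 0"
  defines "nf \<equiv> card (support f)"
  shows "(real nf = 2 ^ (m - 1) + 2 ^ ((m - 2) div 2) \<or> real nf = 2 ^ (m - 1) - 2 ^ ((m - 2) div 2))
    \<and> card (code m (support f)) = 2 ^ m
    \<and> real (min_distance m (support f)) = (real nf - 2 ^ ((m - 2) div 2)) / 2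
    \<and> (\<exists>w1 w2. w1 \<noteq> w2 \<and> nonzero_weights m (support f) = {w1, w2}
        \<and> real w1 = real nf / 2 - 2 ^ ((m - 4) div 2)
        \<and> real w2 = real nf / 2 + 2 ^ ((m - 4) div 2)
        \<and> real (weight_mult m (support f) w1) = (2 ^ m - 1 - real nf / 2 ^ ((m - 2) div 2)) / 2
        \<and> real (weight_mult m (support f) w2) = (2 ^ m - 1 + real nf / 2 ^ ((m - 2) div 2)) / 2)"
proof -
  obtain h where m: "m = 2 * h"
    using meven by blast
  have h: "2 \<le> h"
    using m4 m by simp
  obtain \<epsilon> :: int and w1 w2 :: nat where \<epsilon>: "\<epsilon> = 1 \<or> \<epsilon> = -1"
    and nf: "2 * int nf = 2 ^ m - \<epsilon> * 2 ^ h"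
    and code: "card (code m (support f)) = 2 ^ m"
    and weights: "nonzero_weights m (support f) = {w1, w2}" and "w1 < w2"
    and w1: "4 * int w1 = 2 * int nf - 2 ^ h" and w2: "4 * int w2 = 2 * int nf + 2 ^ h"
    and mult1: "2 * int (weight_mult m (support f) w1) = 2 ^ m - 1 - (2 ^ h - \<epsilon>)"
    and mult2: "2 * int (weight_mult m (support f) w2) = 2 ^ m - 1 + (2 ^ h - \<epsilon>)"
    unfolding nf_def by (rule bent_support_code[OF card m h bent f0])
  have "min_distance m (support f) = w1"
    using \<open>w1 < w2\<close> by (simp add: min_distance_def weights)
  then show ?thesis
    using two_weight_parameters[OF m h \<epsilon> nf w1 w2 mult1 mult2] code weights \<open>w1 < w2\<close>
    by (metis less_irrefl)
qed

end
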